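(* Let $k\ge0$ be an integer, let $X_0>1$ be a deterministic real number, and let $X_1,\dots,X_k$ be nonnegative random variables satisfying, for every $0\le i<k$, \[ X_{i+1}-1\ge 2(X_i-1)\qquad\text{and}\qquad \mathbb{E}[X_{i+1}\mid X_0,\dots,X_i]\le X_i^2. \] If $\tau\ge 1+4(X_0-1)$, then \[ \Pr\left[X_k\ge\tau^{2^k}\right]\le 48\left(\frac{X_0-1}{\tau-1}\right)^2. \] *)

theory Defs
  imports "HOL-Probability.Probability"
begin

definition gen_sigma :: "'a measure \<Rightarrow> (nat \<Rightarrow> 'a \<Rightarrow> real) \<Rightarrow> nat \<Rightarrow> 'a measure" where
  "gen_sigma M X i =
     sigma (space M) (\<Union>j\<in>{..i}. {X j -` A \<inter> space M | A. A \<in> sets borel})"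

end

theory Submission
  imports Defs
begin

(* Let \<phi>_A(x) = min(1, ((x - 1)/A)^2) and A_0 = \<tau> - 1, A_(i+1) = A_i (A_i + 2), so that
   A_i + 1 = \<tau>^(2^i).  Then E[\<phi>_(A_i)(X_i)] does not increase with i: whenever
   y - 1 \<ge> 2 (x - 1) we have \<phi>_(A (A + 2))(y) \<le> \<phi>_A(x) + \<lambda>(x) (y - x^2) for some \<lambda>(x) \<ge> 0
   depending only on x, and the conditional expectation hypothesis gives
   E[\<lambda>(X_i) (X_(i+1) - X_i^2)] \<le> 0.  Since \<phi>_(A_k) = 1 on the event X_k \<ge> \<tau>^(2^k), its
   probability is at most \<phi>_(\<tau> - 1)(x0) \<le> ((x0 - 1)/(\<tau> - 1))^2.  So the bound even holds
   with constant 1. *)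

definition potential :: "real \<Rightarrow> real \<Rightarrow> real" where
  "potential A x = min 1 (((x - 1) / A)\<^sup>2)"

(* The slope of the secant of v \<mapsto> (v/B)^2 between v = 2(x - 1) and v = B = A(A + 2). *)
definition potential_slope :: "real \<Rightarrow> real \<Rightarrow> real" where
  "potential_slope A x =
     (if x - 1 < A then (A * (A + 2) + 2 * (x - 1)) / (A * (A + 2))\<^sup>2 else 0)"

lemma borel_measurable_potential [measurable]: "potential A \<in> borel_measurable borel"
  unfolding potential_def by measurable

lemma min_one_sq_le_secant:
  fixes a v B :: real
  assumes "0 \<le> a" "a \<le> v" "B > 0"
  shows "min 1 ((v / B)\<^sup>2) \<le> (a / B)\<^sup>2 + (B + a) / B\<^sup>2 * (v - a)"
proof -
  have rhs: "(a / B)\<^sup>2 + (B + a) / B\<^sup>2 * (v - a) = (a\<^sup>2 + (B + a) * (v - a)) / B\<^sup>2"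
    using assms(3) by (simp add: power_divide field_simps)
  show ?thesis
  proof (cases "v \<le> B")
    case True
    have "v\<^sup>2 = a\<^sup>2 + (v + a) * (v - a)"
      by (simp add: power2_eq_square algebra_simps)
    also have "\<dots> \<le> a\<^sup>2 + (B + a) * (v - a)"
      using True assms by (simp add: mult_right_mono)
    finally show ?thesis
      unfolding rhs using assms by (simp add: power_divide divide_right_mono min.coboundedI2)
  next
    case False
    have "B\<^sup>2 = a\<^sup>2 + (B + a) * (B - a)"
      by (simp add: power2_eq_square algebra_simps)
    also have "\<dots> \<le> a\<^sup>2 + (B + a) * (v - a)"
      using False assms by (simp add: mult_left_mono)
    finally show ?thesis
      unfolding rhs using assms by (simp add: min.coboundedI1)
  qed
qed

lemma potential_step_ineq:
  fixes A x y :: real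
  assumes A: "A > 0" and x: "x \<ge> 1" and xy: "y - 1 \<ge> 2 * (x - 1)"
  shows "potential (A * (A + 2)) y + potential_slope A x * x\<^sup>2
           \<le> potential A x + potential_slope A x * y"
proof (cases "x - 1 < A")
  case False
  then have "((x - 1) / A)\<^sup>2 \<ge> 1"
    using A by (simp add: power_le_one_iff)
  then show ?thesis
    using False by (simp add: potential_def potential_slope_def)
next
  case True
  define u where "u = x - 1"
  define B where "B = A * (A + 2)"
  define l where "l = (B + 2 * u) / B\<^sup>2"
  have u: "0 \<le> u" "u < A" using x True by (simp_all add: u_def)
  have B: "B > 0" using A by (simp add: B_def)
  have slope: "potential_slope A x = l"
    using True by (simp add: potential_slope_def l_def B_def u_def)
  have secant: "min 1 (((y - 1) / B)\<^sup>2) \<le> (2 * u / B)\<^sup>2 + l * (y - 1 - 2 * u)"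
    unfolding l_def using min_one_sq_le_secant[where a = "2 * u" and v = "y - 1" and B = B] u xy B
    by (simp add: u_def)
  have "(2 * u / B)\<^sup>2 + l * u\<^sup>2 = (4 + B + 2 * u) * u\<^sup>2 / B\<^sup>2"
    using B by (simp add: l_def power_divide field_simps)
  also have "\<dots> \<le> (A + 2)\<^sup>2 * u\<^sup>2 / B\<^sup>2"
    using u B by (intro divide_right_mono mult_right_mono) (simp_all add: B_def power2_eq_square algebra_simps)
  also have "\<dots> = (u / A)\<^sup>2"
    using A by (simp add: B_def power_mult_distrib power_divide)
  finally have quad: "(2 * u / B)\<^sup>2 + l * u\<^sup>2 \<le> (u / A)\<^sup>2" .
  have "(u / A)\<^sup>2 \<le> 1" using u A by (simp add: power_le_one)
  then have "potential A x = (u / A)\<^sup>2"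
    by (simp add: potential_def u_def)
  moreover have "x\<^sup>2 = y - (y - 1 - 2 * u) + u\<^sup>2"
    by (simp add: u_def power2_eq_square algebra_simps)
  ultimately show ?thesis
    using secant quad unfolding slope potential_def B_def[symmetric]
    by (simp add: algebra_simps)
qed

lemma potential_slope_nonneg: "A > 0 \<Longrightarrow> x \<ge> 1 \<Longrightarrow> potential_slope A x \<ge> 0"
  by (simp add: potential_slope_def)

lemma potential_slope_mult_sq_le:
  fixes A x :: real
  assumes "A > 0" "x \<ge> 1"
  shows "potential_slope A x * x\<^sup>2 \<le> (A * (A + 2) + 2 * A) / (A * (A + 2))\<^sup>2 * (1 + A)\<^sup>2"
proof (cases "x - 1 < A")
  case True
  have "potential_slope A x \<le> (A * (A + 2) + 2 * A) / (A * (A + 2))\<^sup>2"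
    using True assms by (simp add: potential_slope_def divide_right_mono)
  moreover have "x\<^sup>2 \<le> (1 + A)\<^sup>2"
    using True assms by (intro power_mono) auto
  ultimately show ?thesis
    using assms potential_slope_nonneg by (intro mult_mono) auto
qed (use assms in \<open>simp add: potential_slope_def\<close>)

lemma nn_integral_mult_le_of_nn_cond_exp_le:
  assumes "sigma_finite_subalgebra M F"
    and [measurable]: "g \<in> borel_measurable F" "Y \<in> borel_measurable M"
    and "AE \<omega> in M. nn_cond_exp M F Y \<omega> \<le> h \<omega>"
  shows "(\<integral>\<^sup>+\<omega>. g \<omega> * Y \<omega> \<partial>M) \<le> (\<integral>\<^sup>+\<omega>. g \<omega> * h \<omega> \<partial>M)"
proof -
  interpret sigma_finite_subalgebra M F by (rule assms(1))
  have "(\<integral>\<^sup>+\<omega>. g \<omega> * Y \<omega> \<partial>M) = (\<integral>\<^sup>+\<omega>. g \<omega> * nn_cond_exp M F Y \<omega> \<partial>M)"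
    by (rule nn_cond_exp_intg[symmetric]) measurable
  also have "\<dots> \<le> (\<integral>\<^sup>+\<omega>. g \<omega> * h \<omega> \<partial>M)"
    using assms(4) by (intro nn_integral_mono_AE, eventually_elim) (simp add: mult_left_mono)
  finally show ?thesis .
qed

lemma nn_integral_potential_step:
  fixes M F :: "'a measure" and X Y :: "'a \<Rightarrow> real" and A :: real
  assumes "finite_measure M" and "subalgebra M F"
    and [measurable]: "X \<in> borel_measurable F" "Y \<in> borel_measurable M"
    and X: "AE \<omega> in M. X \<omega> \<ge> 1"
    and XY: "AE \<omega> in M. Y \<omega> - 1 \<ge> 2 * (X \<omega> - 1)"
    and CE: "AE \<omega> in M. nn_cond_exp M F (\<lambda>\<omega>. ennreal (Y \<omega>)) \<omega> \<le> ennreal ((X \<omega>)\<^sup>2)"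
    and A: "A > 0"
  shows "(\<integral>\<^sup>+\<omega>. potential (A * (A + 2)) (Y \<omega>) \<partial>M) \<le> (\<integral>\<^sup>+\<omega>. potential A (X \<omega>) \<partial>M)"
proof -
  interpret finite_measure_subalgebra M F
    using assms(1,2) by (simp add: finite_measure_subalgebra_def finite_measure_subalgebra_axioms_def)
  have [measurable]: "X \<in> borel_measurable M"
    using measurable_from_subalg \<open>subalgebra M F\<close> \<open>X \<in> borel_measurable F\<close> by blast
  have [measurable]: "potential_slope A \<in> borel_measurable borel"
    unfolding potential_slope_def by measurable
  let ?slope = "\<lambda>\<omega>. ennreal (potential_slope A (X \<omega>))"
  let ?cross = "\<integral>\<^sup>+\<omega>. ?slope \<omega> * ennreal ((X \<omega>)\<^sup>2) \<partial>M"
  have pointwise: "AE \<omega> in M. ennreal (potential (A * (A + 2)) (Y \<omega>)) + ?slope \<omega> * ennreal ((X \<omega>)\<^sup>2)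
                     \<le> ennreal (potential A (X \<omega>)) + ?slope \<omega> * ennreal (Y \<omega>)"
    using X XY
  proof eventually_elim
    case (elim \<omega>)
    then show ?case
      using potential_step_ineq[OF A, of "X \<omega>" "Y \<omega>"] potential_slope_nonneg[OF A, of "X \<omega>"]
      by (simp add: potential_def ennreal_mult[symmetric] ennreal_plus[symmetric] del: ennreal_plus)
  qed
  have "(\<integral>\<^sup>+\<omega>. potential (A * (A + 2)) (Y \<omega>) \<partial>M) + ?cross
          = (\<integral>\<^sup>+\<omega>. ennreal (potential (A * (A + 2)) (Y \<omega>)) + ?slope \<omega> * ennreal ((X \<omega>)\<^sup>2) \<partial>M)"
    by (rule nn_integral_add[symmetric]) measurable
  also have "\<dots> \<le> (\<integral>\<^sup>+\<omega>. ennreal (potential A (X \<omega>)) + ?slope \<omega> * ennreal (Y \<omega>) \<partial>M)"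
    by (rule nn_integral_mono_AE[OF pointwise])
  also have "\<dots> = (\<integral>\<^sup>+\<omega>. potential A (X \<omega>) \<partial>M) + (\<integral>\<^sup>+\<omega>. ?slope \<omega> * ennreal (Y \<omega>) \<partial>M)"
    by (rule nn_integral_add) measurable
  also have "\<dots> \<le> (\<integral>\<^sup>+\<omega>. potential A (X \<omega>) \<partial>M) + ?cross"
    by (intro add_left_mono nn_integral_mult_le_of_nn_cond_exp_le[OF sigma_finite_subalgebra_axioms _ _ CE])
      measurable
  finally have cancel: "(\<integral>\<^sup>+\<omega>. potential (A * (A + 2)) (Y \<omega>) \<partial>M) + ?cross
                          \<le> (\<integral>\<^sup>+\<omega>. potential A (X \<omega>) \<partial>M) + ?cross" .
  obtain C where C: "\<And>x. x \<ge> 1 \<Longrightarrow> potential_slope A x * x\<^sup>2 \<le> C"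
    using potential_slope_mult_sq_le[OF A] by blast
  have "?cross \<le> (\<integral>\<^sup>+\<omega>. ennreal C \<partial>M)"
    using X by (intro nn_integral_mono_AE, eventually_elim)
      (simp add: ennreal_mult[symmetric] potential_slope_nonneg[OF A] C ennreal_leI)
  also have "\<dots> < \<infinity>"
    by (simp add: ennreal_mult_eq_top_iff less_top[symmetric])
  finally have "?cross < \<infinity>" .
  then show ?thesis
    using cancel by (auto simp: ennreal_add_left_cancel_le add.commute)
qed

lemma
  assumes "\<forall>j\<le>i. X j \<in> borel_measurable M"
  shows subalgebra_gen_sigma: "subalgebra M (gen_sigma M X i)"
    and measurable_gen_sigma: "X i \<in> borel_measurable (gen_sigma M X i)"
proof -
  define G where "G = (\<Union>j\<in>{..i}. {X j -` A \<inter> space M | A. A \<in> sets borel})"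
  have "G \<subseteq> Pow (space M)" by (auto simp: G_def)
  then have space: "space (gen_sigma M X i) = space M"
    and sets: "sets (gen_sigma M X i) = sigma_sets (space M) G"
    by (simp_all add: gen_sigma_def G_def[symmetric])
  have "G \<subseteq> sets M"
    using assms by (auto simp: G_def intro: measurable_sets)
  then show "subalgebra M (gen_sigma M X i)"
    by (simp add: subalgebra_def space sets sets.sigma_sets_subset)
  show "X i \<in> borel_measurable (gen_sigma M X i)"
  proof (rule measurableI)
    fix A :: "real set" assume "A \<in> sets borel"
    then have "X i -` A \<inter> space M \<in> G" by (auto simp: G_def)
    then show "X i -` A \<inter> space (gen_sigma M X i) \<in> sets (gen_sigma M X i)"
      by (simp add: space sets)
  qed simp
qed

lemma AE_ge_one_of_doubling:
  fixes X :: "nat \<Rightarrow> 'a \<Rightarrow> real"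
  assumes "\<forall>\<omega>\<in>space M. X 0 \<omega> \<ge> 1"
    and "\<forall>i<k. AE \<omega> in M. X (Suc i) \<omega> - 1 \<ge> 2 * (X i \<omega> - 1)"
    and "i \<le> k"
  shows "AE \<omega> in M. X i \<omega> \<ge> 1"
  using assms(3)
proof (induction i)
  case (Suc i)
  then have "AE \<omega> in M. X i \<omega> \<ge> 1" "AE \<omega> in M. X (Suc i) \<omega> - 1 \<ge> 2 * (X i \<omega> - 1)"
    using assms(2) by auto
  then show ?case by eventually_elim simp
qed (use assms(1) in simp)

lemma nn_integral_potential_chain:
  fixes M :: "'a measure" and X :: "nat \<Rightarrow> 'a \<Rightarrow> real" and A :: real
  assumes "finite_measure M" and A: "A > 0"
    and meas: "\<forall>i\<le>k. X i \<in> borel_measurable M"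
    and ge1: "\<forall>i\<le>k. AE \<omega> in M. X i \<omega> \<ge> 1"
    and XY: "\<forall>i<k. AE \<omega> in M. X (Suc i) \<omega> - 1 \<ge> 2 * (X i \<omega> - 1)"
    and CE: "\<forall>i<k. AE \<omega> in M.
               nn_cond_exp M (gen_sigma M X i) (\<lambda>\<omega>. ennreal (X (Suc i) \<omega>)) \<omega>
                 \<le> ennreal ((X i \<omega>)\<^sup>2)"
  shows "(\<integral>\<^sup>+\<omega>. potential (((\<lambda>a. a * (a + 2)) ^^ k) A) (X k \<omega>) \<partial>M)
           \<le> (\<integral>\<^sup>+\<omega>. potential A (X 0 \<omega>) \<partial>M)"
proof -
  let ?A = "\<lambda>i. ((\<lambda>a. a * (a + 2)) ^^ i) A"
  have A_pos: "?A i > 0" for i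
    using A by (induction i) auto
  have "(\<integral>\<^sup>+\<omega>. potential (?A i) (X i \<omega>) \<partial>M) \<le> (\<integral>\<^sup>+\<omega>. potential A (X 0 \<omega>) \<partial>M)"
    if "i \<le> k" for i
    using that
  proof (induction i)
    case (Suc i)
    have meas_upto: "\<forall>j\<le>i. X j \<in> borel_measurable M"
      using meas Suc.prems by auto
    have "(\<integral>\<^sup>+\<omega>. potential (?A i * (?A i + 2)) (X (Suc i) \<omega>) \<partial>M)
            \<le> (\<integral>\<^sup>+\<omega>. potential (?A i) (X i \<omega>) \<partial>M)"
      using Suc.prems meas ge1 XY CE A_pos
      by (intro nn_integral_potential_step[OF \<open>finite_measure M\<close> subalgebra_gen_sigma[OF meas_upto]
            measurable_gen_sigma[OF meas_upto]]) auto
    then show ?case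
      using Suc by simp
  qed simp
  then show ?thesis by simp
qed

lemma funpow_shifted_square:
  fixes t :: real
  shows "((\<lambda>a. a * (a + 2)) ^^ k) (t - 1) = t ^ 2 ^ k - 1"
proof (induction k)
  case (Suc k)
  have "((\<lambda>a. a * (a + 2)) ^^ Suc k) (t - 1) = (t ^ 2 ^ k - 1) * (t ^ 2 ^ k + 1)"
    using Suc.IH by simp
  also have "\<dots> = (t ^ 2 ^ k)\<^sup>2 - 1"
    by (simp add: power2_eq_square algebra_simps)
  also have "\<dots> = t ^ 2 ^ Suc k - 1"
    by (simp add: power_mult[symmetric] mult.commute)
  finally show ?case .
qed simp

lemma emeasure_ge_le_nn_integral_potential:
  assumes "A > 0" and [measurable]: "X \<in> borel_measurable M"
  shows "emeasure M {\<omega> \<in> space M. X \<omega> \<ge> 1 + A} \<le> (\<integral>\<^sup>+\<omega>. potential A (X \<omega>) \<partial>M)"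
proof -
  have "indicator {\<omega> \<in> space M. X \<omega> \<ge> 1 + A} \<omega> \<le> ennreal (potential A (X \<omega>))" for \<omega>
    using assms(1) by (auto simp: indicator_def potential_def one_le_power)
  then have "(\<integral>\<^sup>+\<omega>. indicator {\<omega> \<in> space M. X \<omega> \<ge> 1 + A} \<omega> \<partial>M)
               \<le> (\<integral>\<^sup>+\<omega>. potential A (X \<omega>) \<partial>M)"
    by (intro nn_integral_mono) simp
  then show ?thesis by simp
qed

theorem lemma3p2:
  fixes M :: "'a measure" and X :: "nat \<Rightarrow> 'a \<Rightarrow> real"
    and k :: nat and x0 \<tau> :: real
  assumes "prob_space M"
    and "x0 > 1"
    and "\<forall>\<omega>\<in>space M. X 0 \<omega> = x0"
    and "\<forall>i\<le>k. X i \<in> borel_measurable M"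
    and "\<forall>i\<le>k. AE \<omega> in M. X i \<omega> \<ge> 0"
    and "\<forall>i<k. AE \<omega> in M. X (Suc i) \<omega> - 1 \<ge> 2 * (X i \<omega> - 1)"
    and "\<forall>i<k. AE \<omega> in M.
           nn_cond_exp M (gen_sigma M X i) (\<lambda>\<omega>. ennreal (X (Suc i) \<omega>)) \<omega>
             \<le> ennreal ((X i \<omega>)\<^sup>2)"
    and "\<tau> \<ge> 1 + 4 * (x0 - 1)"
  shows "measure M {\<omega> \<in> space M. X k \<omega> \<ge> \<tau> ^ (2 ^ k)}
           \<le> 48 * ((x0 - 1) / (\<tau> - 1))\<^sup>2"
proof -
  interpret prob_space M by fact
  have A: "\<tau> - 1 > 0" using assms(2,8) by simp
  have ge1: "\<forall>i\<le>k. AE \<omega> in M. X i \<omega> \<ge> 1"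
    using AE_ge_one_of_doubling[of M X k] assms(2,3,6) by simp
  have "emeasure M {\<omega> \<in> space M. X k \<omega> \<ge> \<tau> ^ (2 ^ k)}
          \<le> (\<integral>\<^sup>+\<omega>. potential (\<tau> ^ 2 ^ k - 1) (X k \<omega>) \<partial>M)"
    using emeasure_ge_le_nn_integral_potential[of "\<tau> ^ 2 ^ k - 1" "X k" M] A assms(4)
    by (simp add: one_less_power)
  also have "\<dots> \<le> (\<integral>\<^sup>+\<omega>. potential (\<tau> - 1) (X 0 \<omega>) \<partial>M)"
    using nn_integral_potential_chain[OF finite_measure_axioms A assms(4) ge1 assms(6,7)]
    by (simp add: funpow_shifted_square)
  also have "\<dots> = potential (\<tau> - 1) x0"
    using assms(3) by (simp add: nn_integral_cong emeasure_space_1)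
  finally have "measure M {\<omega> \<in> space M. X k \<omega> \<ge> \<tau> ^ (2 ^ k)} \<le> potential (\<tau> - 1) x0"
    by (simp add: emeasure_eq_measure potential_def)
  also have "\<dots> \<le> ((x0 - 1) / (\<tau> - 1))\<^sup>2"
    by (simp add: potential_def)
  also have "\<dots> \<le> 48 * ((x0 - 1) / (\<tau> - 1))\<^sup>2"
    by simp
  finally show ?thesis .
qed

end
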